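(* In the supersample setting described in the context, let $\ell$ be the zero-one loss and let $\mathcal A$ be an interpolating algorithm. For each $i$, let $\alpha_i=P(\Delta L_i=0\mid U_i=0)$ (which equals $P(\Delta L_i=0\mid U_i=1)$). Then for each $i$, $I(\Delta L_i;U_i)=(1-\alpha_i)\ln 2$ nats, and \[ |\mathrm{Err}|=L_\mu=\sum_{i=1}^n\frac{I(\Delta L_i;U_i)}{n\ln 2}. \]
   Context: Let $\mathcal Z=\mathcal X\times\mathcal Y$ and let $\mu$ be a distribution on $\mathcal Z$. A (possibly randomized) learning algorithm $\mathcal A$ maps a training sample in $\mathcal Z^n$ to a hypothesis $W\in\mathcal W$ (described by $P_{W|S}$); each $w$ defines a predictor $f_w:\mathcal X\to\mathcal Y$. The zero-one loss is $\ell(w,(x,y))=\mathbb 1\{f_w(x)\neq y\}$. For $S=(Z_1,\dots,Z_n)\sim\mu^{n}$ and $W\sim P_{W|S}$, let $L_\mu=\mathbb E_W\mathbb E_{Z'\sim\mu}[\ell(W,Z')]$ (with $Z'$ independent of $(S,W)$), $L_S(w)=\frac1n\sum_{i}\ell(w,Z_i)$, $L_n=\mathbb E_{W,S}[L_S(W)]$, $\mathrm{Err}=L_\mu-L_n$. Supersample: $\widetilde Z=(\widetilde Z_{i,j})_{i\in\{1,\dots,n\},j\in\{0,1\}}$ with i.i.d. entries of law $\mu$; $U=(U_1,\dots,U_n)$ uniform on $\{0,1\}^n$, independent of $\widetilde Z$; $W=\mathcal A(\widetilde Z_U)$ where $\widetilde Z_U=(\widetilde Z_{1,U_1},\dots,\widetilde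 Z_{n,U_n})$. Put $L_{i,j}=\ell(W,\widetilde Z_{i,j})$, $L_i^+=L_{i,0}$, $L_i^-=L_{i,1}$, $\Delta L_i=L_i^- - L_i^+\in\{-1,0,1\}$. An algorithm is interpolating if it achieves zero training error, i.e. $\ell(W,\widetilde Z_{i,U_i})=0$ almost surely for every $i$. Mutual information is in nats. *)

theory Defs
  imports "HOL-Probability.Probability"
begin

definition zero_one_loss :: "('w \<Rightarrow> 'x \<Rightarrow> 'y) \<Rightarrow> 'w \<Rightarrow> 'x \<times> 'y \<Rightarrow> real" where
  "zero_one_loss f w z = (if f w (fst z) = snd z then 0 else 1)"

definition std_joint :: "nat \<Rightarrow> 'z measure \<Rightarrow> 'w measure \<Rightarrow> ((nat \<Rightarrow> 'z) \<Rightarrow> 'w measure)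
    \<Rightarrow> ((nat \<Rightarrow> 'z) \<times> 'w) measure" where
  "std_joint n \<mu> Wm A =
     (PiM {..<n} (\<lambda>_. \<mu>)) \<bind> (\<lambda>s. A s \<bind> (\<lambda>w. return (PiM {..<n} (\<lambda>_. \<mu>) \<Otimes>\<^sub>M Wm) (s, w)))"

definition pop_risk :: "nat \<Rightarrow> 'z measure \<Rightarrow> 'w measure \<Rightarrow> ((nat \<Rightarrow> 'z) \<Rightarrow> 'w measure)
    \<Rightarrow> ('w \<Rightarrow> 'z \<Rightarrow> real) \<Rightarrow> real" where
  "pop_risk n \<mu> Wm A l = (\<integral>p. (\<integral>z. l (snd p) z \<partial>\<mu>) \<partial>(std_joint n \<mu> Wm A))"

definition emp_risk :: "nat \<Rightarrow> 'z measure \<Rightarrow> 'w measure \<Rightarrow> ((nat \<Rightarrow> 'z) \<Rightarrow> 'w measure)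
    \<Rightarrow> ('w \<Rightarrow> 'z \<Rightarrow> real) \<Rightarrow> real" where
  "emp_risk n \<mu> Wm A l = (\<integral>p. (\<Sum>i<n. l (snd p) (fst p i)) / real n \<partial>(std_joint n \<mu> Wm A))"

definition gen_err :: "nat \<Rightarrow> 'z measure \<Rightarrow> 'w measure \<Rightarrow> ((nat \<Rightarrow> 'z) \<Rightarrow> 'w measure)
    \<Rightarrow> ('w \<Rightarrow> 'z \<Rightarrow> real) \<Rightarrow> real" where
  "gen_err n \<mu> Wm A l = pop_risk n \<mu> Wm A l - emp_risk n \<mu> Wm A l"

text \<open>The supersample is a function on {..<n} x UNIV
  (index j :: bool, False = 0, True = 1) with i.i.d. entries of law mu;
  U is uniform on {0,1}^n (i.i.d. fair bits), independent of the supersample;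
  W ~ A(Z~_U).\<close>
definition super_space :: "nat \<Rightarrow> 'z measure \<Rightarrow> ((nat \<times> bool \<Rightarrow> 'z) \<times> (nat \<Rightarrow> bool)) measure" where
  "super_space n \<mu> = PiM ({..<n} \<times> UNIV) (\<lambda>_. \<mu>) \<Otimes>\<^sub>M PiM {..<n} (\<lambda>_. measure_pmf (bernoulli_pmf (1/2)))"

definition select :: "nat \<Rightarrow> (nat \<times> bool \<Rightarrow> 'z) \<Rightarrow> (nat \<Rightarrow> bool) \<Rightarrow> (nat \<Rightarrow> 'z)" where
  "select n zt u = restrict (\<lambda>i. zt (i, u i)) {..<n}"

definition super_joint :: "nat \<Rightarrow> 'z measure \<Rightarrow> 'w measure \<Rightarrow> ((nat \<Rightarrow> 'z) \<Rightarrow> 'w measure)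
    \<Rightarrow> (((nat \<times> bool \<Rightarrow> 'z) \<times> (nat \<Rightarrow> bool)) \<times> 'w) measure" where
  "super_joint n \<mu> Wm A =
     super_space n \<mu> \<bind>
       (\<lambda>(zt, u). A (select n zt u) \<bind> (\<lambda>w. return (super_space n \<mu> \<Otimes>\<^sub>M Wm) ((zt, u), w)))"

definition sU :: "nat \<Rightarrow> ((nat \<times> bool \<Rightarrow> 'z) \<times> (nat \<Rightarrow> bool)) \<times> 'w \<Rightarrow> bool" where
  "sU i x = snd (fst x) i"

definition sW :: "((nat \<times> bool \<Rightarrow> 'z) \<times> (nat \<Rightarrow> bool)) \<times> 'w \<Rightarrow> 'w" where
  "sW x = snd x"

definition sZ :: "nat \<Rightarrow> bool \<Rightarrow> ((nat \<times> bool \<Rightarrow> 'z) \<times> (nat \<Rightarrow> bool)) \<times> 'w \<Rightarrow> 'z" where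
  "sZ i j x = fst (fst x) (i, j)"

definition sL :: "('w \<Rightarrow> 'z \<Rightarrow> real) \<Rightarrow> nat \<Rightarrow> bool \<Rightarrow> ((nat \<times> bool \<Rightarrow> 'z) \<times> (nat \<Rightarrow> bool)) \<times> 'w \<Rightarrow> real" where
  "sL l i j x = l (sW x) (sZ i j x)"

definition deltaL :: "('w \<Rightarrow> 'z \<Rightarrow> real) \<Rightarrow> nat \<Rightarrow> ((nat \<times> bool \<Rightarrow> 'z) \<times> (nat \<Rightarrow> bool)) \<times> 'w \<Rightarrow> real" where
  "deltaL l i x = sL l i True x - sL l i False x"

definition MI_nats :: "'a measure \<Rightarrow> ('a \<Rightarrow> 'b) \<Rightarrow> ('a \<Rightarrow> 'c) \<Rightarrow> real" where
  "MI_nats M X Y = prob_space.mutual_information M (exp 1) (count_space UNIV) (count_space UNIV) X Y"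

end

theory Submission
  imports Defs
begin

text \<open>
  Condition on \<open>U\<^sub>i = b\<close>. Interpolation makes the loss on the training entry
  \<open>Z\<^sub>i\<^sub>,\<^sub>b\<close> vanish, so \<open>\<Delta>L\<^sub>i\<close> is the loss on the held-out entry
  \<open>Z\<^sub>i\<^sub>,\<^sub>\<not>\<^sub>b\<close>, with a sign that reveals \<open>b\<close>. The training sample together
  with the held-out entry is distributed as \<open>\<mu>\<^sup>n \<otimes> \<mu>\<close> whatever the coins are, so this
  loss is \<open>1\<close> with probability \<open>L\<^sub>\<mu>\<close>. Hence \<open>\<Delta>L\<^sub>i\<close> is the output of a binary
  erasure channel fed with the fair bit \<open>U\<^sub>i\<close>, with erasure probability
  \<open>\<alpha>\<^sub>i = 1 - L\<^sub>\<mu>\<close>, and \<open>I(\<Delta>L\<^sub>i; U\<^sub>i) = (1 - \<alpha>\<^sub>i) ln 2\<close>. The empirical risk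
  vanishes by interpolation, so \<open>|Err| = L\<^sub>\<mu>\<close>.
\<close>

section \<open>Finitely supported measures\<close>

lemma measure_eqI_finite_support:
  assumes sets_eq: "sets M = sets N" and F: "finite F" "\<And>z. z \<in> F \<Longrightarrow> {z} \<in> sets M"
    and null_M: "emeasure M (space M - F) = 0" and null_N: "emeasure N (space N - F) = 0"
    and singleton: "\<And>z. z \<in> F \<Longrightarrow> emeasure M {z} = emeasure N {z}"
  shows "M = N"
proof (rule measure_eqI[OF sets_eq])
  have F_sets: "F \<in> sets M"
    by (rule sets.countable[OF F(2) countable_finite[OF F(1)]])
  have on_F: "emeasure K S = (\<Sum>z\<in>S \<inter> F. emeasure K {z})"
    if "sets K = sets M" "emeasure K (space K - F) = 0" "S \<in> sets K" for K S
  proof -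
    have "space K - F \<in> null_sets K"
      using that F_sets by (auto simp: null_sets_def)
    then have "emeasure K S = emeasure K (S - (space K - F))"
      using that by (simp add: emeasure_Diff_null_set)
    also have "S - (space K - F) = S \<inter> F"
      using sets.sets_into_space[OF \<open>S \<in> sets K\<close>] by auto
    also have "emeasure K (S \<inter> F) = (\<Sum>z\<in>S \<inter> F. emeasure K {z})"
      using F that by (intro emeasure_eq_sum_singleton) auto
    finally show ?thesis .
  qed
  fix S assume "S \<in> sets M"
  then show "emeasure M S = emeasure N S"
    using on_F[of M S] on_F[of N S] null_M null_N sets_eq singleton by simp
qed

lemma sum_indicator_singletons:
  "finite F \<Longrightarrow> (\<Sum>w\<in>F. c w * indicator {w} z) = (if z \<in> F then c z else (0 :: real))"
  by (auto simp: indicator_def intro!: sum.neutral)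

lemma (in finite_measure) integral_finite_support:
  fixes f :: "'a \<Rightarrow> real"
  assumes f: "f \<in> borel_measurable M" and F: "finite F" "\<And>z. z \<in> F \<Longrightarrow> {z} \<in> sets M"
    and null: "emeasure M (space M - F) = 0"
  shows "(\<integral>x. f x \<partial>M) = (\<Sum>z\<in>F. f z * measure M {z})"
proof -
  have "F \<in> sets M"
    by (rule sets.countable[OF F(2) countable_finite[OF F(1)]])
  then have "AE x in M. x \<in> F"
    using null by (intro AE_I[of _ _ "space M - F"]) auto
  then have "AE x in M. f x = (\<Sum>z\<in>F. f z * indicator {z} x)"
    by eventually_elim (simp add: F indicator_def)
  moreover have "(\<lambda>x. \<Sum>z\<in>F. f z * indicator {z} x) \<in> borel_measurable M"
    using F by (intro borel_measurable_sum borel_measurable_times borel_measurable_indicator) auto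
  ultimately have "(\<integral>x. f x \<partial>M) = (\<integral>x. (\<Sum>z\<in>F. f z * indicator {z} x) \<partial>M)"
    using f by (intro integral_cong_AE) auto
  also have "\<dots> = (\<Sum>z\<in>F. f z * measure M {z})"
    using F by (subst Bochner_Integration.integral_sum) (auto simp: emeasure_eq_measure)
  finally show ?thesis .
qed

context
  fixes P Q :: "'a measure" and F :: "'a set"
  assumes P: "finite_measure P" and Q: "finite_measure Q" and sets_eq: "sets Q = sets P"
    and F: "finite F" "\<And>z. z \<in> F \<Longrightarrow> {z} \<in> sets P"
    and null_P: "emeasure P (space P - F) = 0" and null_Q: "emeasure Q (space Q - F) = 0"
    and absolutely_continuous: "\<And>z. z \<in> F \<Longrightarrow> measure P {z} = 0 \<Longrightarrow> measure Q {z} = 0"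
begin

lemma density_finite_support:
  "density P (\<lambda>z. \<Sum>w\<in>F. measure Q {w} / measure P {w} * indicator {w} z) = Q"
proof -
  define r where "r w = measure Q {w} / measure P {w}" for w
  define g where "g z = (\<Sum>w\<in>F. r w * indicator {w} z)" for z
  have g_meas: "g \<in> borel_measurable P"
    unfolding g_def using F by (intro borel_measurable_sum borel_measurable_times borel_measurable_indicator) auto
  have "density P g = Q"
  proof (rule measure_eqI_finite_support[OF _ F(1)])
    show "sets (density P g) = sets Q"
      using sets_eq by simp
    show "{z} \<in> sets (density P g)" if "z \<in> F" for z
      using F(2)[OF that] by simp
    show "emeasure Q (space Q - F) = 0"
      by (fact null_Q)
    have "F \<in> sets P"
      by (rule sets.countable[OF F(2) countable_finite[OF F(1)]])
    then have "emeasure (density P g) (space P - F) = (\<integral>\<^sup>+w. ennreal (g w) * indicator (space P - F) w \<partial>P)"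
      using g_meas by (intro emeasure_density) auto
    also have "\<dots> = (\<integral>\<^sup>+w. 0 \<partial>P)"
      unfolding g_def sum_indicator_singletons[OF F(1)]
      by (intro nn_integral_cong) (simp split: split_indicator)
    finally show "emeasure (density P g) (space (density P g) - F) = 0"
      by simp
    fix z assume z: "z \<in> F"
    have "emeasure (density P g) {z} = (\<integral>\<^sup>+w. ennreal (r z) * indicator {z} w \<partial>P)"
      using g_meas F(2)[OF z] z unfolding g_def sum_indicator_singletons[OF F(1)]
      by (subst emeasure_density) (auto intro!: nn_integral_cong split: split_indicator)
    also have "\<dots> = ennreal (r z) * ennreal (measure P {z})"
      using F(2)[OF z] by (simp add: nn_integral_cmult_indicator finite_measure.emeasure_eq_measure[OF P])
    also have "\<dots> = ennreal (r z * measure P {z})"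
      by (rule ennreal_mult[symmetric]) (simp_all add: r_def)
    also have "r z * measure P {z} = measure Q {z}"
      using absolutely_continuous[OF z] by (auto simp: r_def)
    finally show "emeasure (density P g) {z} = emeasure Q {z}"
      by (simp add: finite_measure.emeasure_eq_measure[OF Q])
  qed
  then show ?thesis
    by (simp add: g_def r_def)
qed

lemma KL_divergence_finite_support:
  assumes b: "1 < b"
  shows "KL_divergence b P Q = (\<Sum>z\<in>F. measure Q {z} * log b (measure Q {z} / measure P {z}))"
proof -
  define g where "g z = (\<Sum>w\<in>F. measure Q {w} / measure P {w} * indicator {w} z)" for z
  have g_meas: "g \<in> borel_measurable P"
    unfolding g_def using F by (intro borel_measurable_sum borel_measurable_times borel_measurable_indicator) auto
  have g_F: "g z = measure Q {z} / measure P {z}" if "z \<in> F" for z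
    using that unfolding g_def sum_indicator_singletons[OF F(1)] by simp
  have g_nonneg: "0 \<le> g z" for z
    unfolding g_def by (intro sum_nonneg mult_nonneg_nonneg) auto
  have "KL_divergence b P Q = KL_divergence b P (density P g)"
    unfolding g_def density_finite_support ..
  also have "\<dots> = (\<integral>z. g z * log b (g z) \<partial>P)"
    using b g_meas g_nonneg by (intro sigma_finite_measure.KL_density finite_measure.sigma_finite_measure[OF P]) auto
  also have "\<dots> = (\<Sum>z\<in>F. g z * log b (g z) * measure P {z})"
    using g_meas F null_P by (intro finite_measure.integral_finite_support[OF P]) auto
  also have "\<dots> = (\<Sum>z\<in>F. measure Q {z} * log b (measure Q {z} / measure P {z}))"
  proof (intro sum.cong refl)
    fix z assume z: "z \<in> F"
    have "g z * log b (g z) * measure P {z} = (g z * measure P {z}) * log b (g z)"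
      by (simp only: ac_simps)
    also have "g z * measure P {z} = measure Q {z}"
      using absolutely_continuous[OF z] by (auto simp: g_F[OF z])
    finally show "g z * log b (g z) * measure P {z} = measure Q {z} * log b (measure Q {z} / measure P {z})"
      by (simp only: g_F[OF z])
  qed
  finally show ?thesis .
qed

end

section \<open>Mutual information of finitely-valued random variables\<close>

text \<open>
  The library's mutual_information_simple_distributed uses the count spaces on the ranges of the
  variables. Here they take values in \<open>count_space UNIV\<close>, which is not \<open>\<sigma>\<close>-finite on an
  uncountable type, so the formula is rederived from the KL divergence of finitely supported
  measures.
\<close>

context prob_space
begin

context
  fixes X :: "'a \<Rightarrow> 'b" and Y :: "'a \<Rightarrow> 'c"
  assumes X: "X \<in> M \<rightarrow>\<^sub>M count_space UNIV" and Y: "Y \<in> M \<rightarrow>\<^sub>M count_space UNIV"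
begin

lemma measure_distr_Pair_singleton:
  "measure (distr M (count_space UNIV \<Otimes>\<^sub>M count_space UNIV) (\<lambda>\<omega>. (X \<omega>, Y \<omega>))) {(x, y)}
    = prob {\<omega> \<in> space M. X \<omega> = x \<and> Y \<omega> = y}"
proof -
  have "(\<lambda>\<omega>. (X \<omega>, Y \<omega>)) -` {(x, y)} \<inter> space M = {\<omega> \<in> space M. X \<omega> = x \<and> Y \<omega> = y}"
    by auto
  moreover have "{(x, y)} \<in> sets (count_space UNIV \<Otimes>\<^sub>M count_space UNIV)"
    using pair_measureI[of "{x}" _ "{y}"] by simp
  ultimately show ?thesis
    using X Y by (simp add: measure_distr)
qed

lemma measure_pair_distr_singleton:
  "measure (distr M (count_space UNIV) X \<Otimes>\<^sub>M distr M (count_space UNIV) Y) {(x, y)}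
    = prob {\<omega> \<in> space M. X \<omega> = x} * prob {\<omega> \<in> space M. Y \<omega> = y}"
proof -
  interpret PY: prob_space "distr M (count_space UNIV) Y"
    using Y by (rule prob_space_distr)
  have "emeasure (distr M (count_space UNIV) X \<Otimes>\<^sub>M distr M (count_space UNIV) Y) ({x} \<times> {y})
      = emeasure (distr M (count_space UNIV) X) {x} * emeasure (distr M (count_space UNIV) Y) {y}"
    by (rule PY.emeasure_pair_measure_Times) simp_all
  moreover have "emeasure (distr M (count_space UNIV) X) {x} = prob {\<omega> \<in> space M. X \<omega> = x}"
    "emeasure (distr M (count_space UNIV) Y) {y} = prob {\<omega> \<in> space M. Y \<omega> = y}"
    using X Y by (simp_all add: emeasure_distr emeasure_eq_measure vimage_def Int_def conj_commute)
  ultimately show ?thesis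
    by (simp add: measure_def enn2real_mult)
qed

lemma emeasure_pair_distr_outside_range:
  assumes range: "\<And>\<omega>. \<omega> \<in> space M \<Longrightarrow> X \<omega> \<in> SX \<and> Y \<omega> \<in> SY"
  shows "emeasure (distr M (count_space UNIV) X \<Otimes>\<^sub>M distr M (count_space UNIV) Y)
      (space (distr M (count_space UNIV) X \<Otimes>\<^sub>M distr M (count_space UNIV) Y) - SX \<times> SY) = 0"
proof -
  interpret PY: prob_space "distr M (count_space UNIV) Y"
    using Y by (rule prob_space_distr)
  have "X -` (UNIV - SX) \<inter> space M = {}" "Y -` (UNIV - SY) \<inter> space M = {}"
    using range by auto
  then have "emeasure (distr M (count_space UNIV) X) (UNIV - SX) = 0"
    "emeasure (distr M (count_space UNIV) Y) (UNIV - SY) = 0"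
    using X Y by (simp_all add: emeasure_distr)
  then have "(UNIV - SX) \<times> UNIV \<union> UNIV \<times> (UNIV - SY)
      \<in> null_sets (distr M (count_space UNIV) X \<Otimes>\<^sub>M distr M (count_space UNIV) Y)"
    by (intro null_sets.Un) (simp_all add: null_sets_def PY.emeasure_pair_measure_Times)
  moreover have "space (distr M (count_space UNIV) X \<Otimes>\<^sub>M distr M (count_space UNIV) Y) - SX \<times> SY
      \<subseteq> (UNIV - SX) \<times> UNIV \<union> UNIV \<times> (UNIV - SY)"
    by auto
  ultimately show ?thesis
    by (meson emeasure_eq_0 null_setsD1 null_setsD2)
qed

lemma mutual_information_finite_range:
  assumes b: "1 < b" and fin: "finite SX" "finite SY"
    and range: "\<And>\<omega>. \<omega> \<in> space M \<Longrightarrow> X \<omega> \<in> SX \<and> Y \<omega> \<in> SY"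
  defines "pxy \<equiv> \<lambda>x y. prob {\<omega> \<in> space M. X \<omega> = x \<and> Y \<omega> = y}"
    and "px \<equiv> \<lambda>x. prob {\<omega> \<in> space M. X \<omega> = x}"
    and "py \<equiv> \<lambda>y. prob {\<omega> \<in> space M. Y \<omega> = y}"
  shows "mutual_information b (count_space UNIV) (count_space UNIV) X Y =
    (\<Sum>x\<in>SX. \<Sum>y\<in>SY. pxy x y * log b (pxy x y / (px x * py y)))"
proof -
  let ?P = "distr M (count_space UNIV) X \<Otimes>\<^sub>M distr M (count_space UNIV) Y"
  let ?Q = "distr M (count_space UNIV \<Otimes>\<^sub>M count_space UNIV) (\<lambda>\<omega>. (X \<omega>, Y \<omega>))"
  have XY: "(\<lambda>\<omega>. (X \<omega>, Y \<omega>)) \<in> M \<rightarrow>\<^sub>M count_space UNIV \<Otimes>\<^sub>M count_space UNIV"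
    using X Y by measurable
  interpret PX: prob_space "distr M (count_space UNIV) X"
    using X by (rule prob_space_distr)
  interpret PY: prob_space "distr M (count_space UNIV) Y"
    using Y by (rule prob_space_distr)
  interpret P: pair_prob_space "distr M (count_space UNIV) X" "distr M (count_space UNIV) Y" ..
  interpret Q: prob_space ?Q
    using XY by (rule prob_space_distr)
  have sets_Q: "sets ?Q = sets ?P"
    by (simp, intro sets_pair_measure_cong) simp_all
  have singleton_sets: "{z} \<in> sets ?P" for z
    using pair_measureI[of "{fst z}" _ "{snd z}"] by simp
  have Q_null: "emeasure ?Q (space ?Q - SX \<times> SY) = 0"
  proof -
    have "(\<lambda>\<omega>. (X \<omega>, Y \<omega>)) -` (space ?Q - SX \<times> SY) \<inter> space M = {}"
      using range by auto
    moreover have "SX \<times> SY \<in> sets ?Q"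
      unfolding sets_Q using fin by (intro sets.countable[OF singleton_sets] countable_finite) simp
    ultimately show ?thesis
      using XY by (simp add: emeasure_distr sets.Diff)
  qed
  have absolutely_continuous: "measure ?Q {z} = 0" if "measure ?P {z} = 0" for z
  proof -
    obtain x y where z: "z = (x, y)"
      by (cases z)
    have "prob {\<omega> \<in> space M. X \<omega> = x \<and> Y \<omega> = y} \<le> prob {\<omega> \<in> space M. X \<omega> = x}"
      "prob {\<omega> \<in> space M. X \<omega> = x \<and> Y \<omega> = y} \<le> prob {\<omega> \<in> space M. Y \<omega> = y}"
      using X Y by (auto intro!: finite_measure_mono)
    then show ?thesis
      using that by (auto simp: z measure_pair_distr_singleton measure_distr_Pair_singleton intro!: order.antisym)
  qed
  have "mutual_information b (count_space UNIV) (count_space UNIV) X Y = KL_divergence b ?P ?Q"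
    unfolding mutual_information_def ..
  also have "\<dots> = (\<Sum>z\<in>SX \<times> SY. measure ?Q {z} * log b (measure ?Q {z} / measure ?P {z}))"
    using fin singleton_sets emeasure_pair_distr_outside_range[OF range] Q_null absolutely_continuous
    by (intro KL_divergence_finite_support[OF P.finite_measure_axioms Q.finite_measure_axioms sets_Q] b) auto
  also have "\<dots> = (\<Sum>(x, y)\<in>SX \<times> SY. pxy x y * log b (pxy x y / (px x * py y)))"
    by (intro sum.cong) (auto simp: measure_pair_distr_singleton measure_distr_Pair_singleton pxy_def px_def py_def)
  also have "\<dots> = (\<Sum>x\<in>SX. \<Sum>y\<in>SY. pxy x y * log b (pxy x y / (px x * py y)))"
    by (simp add: sum.cartesian_product)
  finally show ?thesis .
qed

end

lemma mutual_information_binary_erasure: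
  fixes D :: "'a \<Rightarrow> real" and U :: "'a \<Rightarrow> bool"
  assumes D: "D \<in> M \<rightarrow>\<^sub>M count_space UNIV" and U: "U \<in> M \<rightarrow>\<^sub>M count_space UNIV"
    and range: "\<And>x. x \<in> space M \<Longrightarrow> D x \<in> {-1, 0, 1}"
    and law: "\<And>d b. prob {x \<in> space M. D x = d \<and> U x = b}
      = (if d = 0 then (1 - L) / 2 else if d = (if b then -1 else 1) then L / 2 else 0)"
  shows "mutual_information (exp 1) (count_space UNIV) (count_space UNIV) D U = L * ln 2"
proof -
  have split_D: "prob {x \<in> space M. D x = d} = prob {x \<in> space M. D x = d \<and> U x = True}
      + prob {x \<in> space M. D x = d \<and> U x = False}" for d
    using D U by (subst finite_measure_Union[symmetric]) (auto intro!: arg_cong[where f=prob])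
  have split_U: "prob {x \<in> space M. U x = b} = (\<Sum>d\<in>{-1, 0, 1}. prob {x \<in> space M. D x = d \<and> U x = b})" for b
  proof -
    have "{x \<in> space M. U x = b} = (\<Union>d\<in>{-1, 0, 1}. {x \<in> space M. D x = d \<and> U x = b})"
      using range by auto
    then show ?thesis
      using D U by (simp only:) (subst finite_measure_finite_Union, auto simp: disjoint_family_on_def)
  qed
  have px: "prob {x \<in> space M. D x = d} = (if d = 0 then 1 - L else if d = 1 \<or> d = -1 then L / 2 else 0)" for d
    using law[of d True] law[of d False] by (simp add: split_D)
  have py: "prob {x \<in> space M. U x = b} = 1/2" for b
    by (simp add: split_U law field_simps)
  have "mutual_information (exp 1) (count_space UNIV) (count_space UNIV) D U
      = (\<Sum>d\<in>{-1, 0, 1}. \<Sum>b\<in>UNIV. prob {x \<in> space M. D x = d \<and> U x = b} *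
          log (exp 1) (prob {x \<in> space M. D x = d \<and> U x = b} /
            (prob {x \<in> space M. D x = d} * prob {x \<in> space M. U x = b})))"
    using range by (intro mutual_information_finite_range[OF D U]) auto
  also have "\<dots> = L * ln 2"
    by (cases "L = 0"; cases "L = 1") (simp_all add: law px py UNIV_bool log_def field_simps)
  finally show ?thesis .
qed

end

section \<open>Measures built from a probability kernel\<close>

lemma measurable_kernel_pair:
  assumes K: "K \<in> M \<rightarrow>\<^sub>M prob_algebra N"
  shows "(\<lambda>x. K x \<bind> (\<lambda>y. return (M \<Otimes>\<^sub>M N) (x, y))) \<in> M \<rightarrow>\<^sub>M prob_algebra (M \<Otimes>\<^sub>M N)"
proof (rule measurable_bind_prob_space2[OF K])
  show "(\<lambda>(x, y). return (M \<Otimes>\<^sub>M N) (x, y)) \<in> M \<Otimes>\<^sub>M N \<rightarrow>\<^sub>M prob_algebra (M \<Otimes>\<^sub>M N)"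
    using measurable_return_prob_space by (simp add: case_prod_beta')
qed

context
  fixes M :: "'a measure" and N :: "'b measure" and K :: "'a \<Rightarrow> 'b measure"
  assumes M: "prob_space M" and K: "K \<in> M \<rightarrow>\<^sub>M prob_algebra N"
begin

lemma prob_space_bind_kernel_pair: "prob_space (M \<bind> (\<lambda>x. K x \<bind> (\<lambda>y. return (M \<Otimes>\<^sub>M N) (x, y))))"
  using M by (intro prob_space_bind'[OF _ measurable_kernel_pair[OF K]]) (simp add: space_prob_algebra)

lemma sets_bind_kernel_pair:
  "sets (M \<bind> (\<lambda>x. K x \<bind> (\<lambda>y. return (M \<Otimes>\<^sub>M N) (x, y)))) = sets (M \<Otimes>\<^sub>M N)"
  using M by (intro sets_bind'[OF _ measurable_kernel_pair[OF K]]) (simp add: space_prob_algebra)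

lemma nn_integral_bind_kernel_pair:
  assumes F: "F \<in> borel_measurable (M \<Otimes>\<^sub>M N)"
  shows "(\<integral>\<^sup>+z. F z \<partial>(M \<bind> (\<lambda>x. K x \<bind> (\<lambda>y. return (M \<Otimes>\<^sub>M N) (x, y)))))
    = (\<integral>\<^sup>+x. \<integral>\<^sup>+y. F (x, y) \<partial>K x \<partial>M)"
proof (subst nn_integral_bind[OF F measurable_prob_algebraD[OF measurable_kernel_pair[OF K]]],
    rule nn_integral_cong)
  fix x assume x: "x \<in> space M"
  then have Kx: "prob_space (K x)" "sets (K x) = sets N"
    using measurable_space[OF K x] by (auto simp: space_prob_algebra)
  then have "K x \<bind> (\<lambda>y. return (M \<Otimes>\<^sub>M N) (x, y)) = distr (K x) (M \<Otimes>\<^sub>M N) (\<lambda>y. (x, y))"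
    using x by (intro bind_return_distr') (auto simp: prob_space.not_empty cong: measurable_cong_sets)
  then show "(\<integral>\<^sup>+z. F z \<partial>(K x \<bind> (\<lambda>y. return (M \<Otimes>\<^sub>M N) (x, y)))) = (\<integral>\<^sup>+y. F (x, y) \<partial>K x)"
    using x Kx F by (simp add: nn_integral_distr cong: measurable_cong_sets)
qed

end

section \<open>The supersample\<close>

lemma super_joint_eq_bind:
  "super_joint n \<mu> Wm A = super_space n \<mu> \<bind>
     (\<lambda>x. A (select n (fst x) (snd x)) \<bind> (\<lambda>w. return (super_space n \<mu> \<Otimes>\<^sub>M Wm) (x, w)))"
  unfolding super_joint_def by (simp add: split_beta')

lemma prob_space_super_space: "prob_space \<mu> \<Longrightarrow> prob_space (super_space n \<mu>)"
  unfolding super_space_def by (intro prob_space_pair prob_space_PiM prob_space_measure_pmf)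

lemma measurable_supersample_coin[measurable]:
  assumes "i < n"
  shows "(\<lambda>x. snd x i) \<in> super_space n \<mu> \<rightarrow>\<^sub>M count_space UNIV"
proof -
  have "(\<lambda>x. snd x i) \<in> super_space n \<mu> \<rightarrow>\<^sub>M measure_pmf (bernoulli_pmf (1/2))"
    unfolding super_space_def using assms
    by (intro measurable_compose[OF measurable_snd measurable_component_singleton]) auto
  then show ?thesis
    by (simp cong: measurable_cong_sets)
qed

lemma measurable_supersample_entry[measurable]:
  "i < n \<Longrightarrow> (\<lambda>x. fst x (i, j)) \<in> super_space n \<mu> \<rightarrow>\<^sub>M \<mu>"
  unfolding super_space_def
  by (intro measurable_compose[OF measurable_fst measurable_component_singleton]) auto

lemma measurable_supersample_coin_entry:
  assumes "i < n"
  shows "(\<lambda>x. fst x (i, c (snd x i))) \<in> super_space n \<mu> \<rightarrow>\<^sub>M \<mu>"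
proof -
  have "(\<lambda>x. if snd x i then fst x (i, c True) else fst x (i, c False)) \<in> super_space n \<mu> \<rightarrow>\<^sub>M \<mu>"
  proof (rule measurable_If)
    show "{x \<in> space (super_space n \<mu>). snd x i} \<in> sets (super_space n \<mu>)"
      by (rule predE) (rule measurable_supersample_coin[OF assms])
  qed (simp_all add: assms)
  then show ?thesis
    by (rule measurable_cong[THEN iffD1, rotated]) auto
qed

lemmas measurable_supersample_held_out[measurable] = measurable_supersample_coin_entry[where c = Not]

lemma measurable_select[measurable]:
  "(\<lambda>x. select n (fst x) (snd x)) \<in> super_space n \<mu> \<rightarrow>\<^sub>M PiM {..<n} (\<lambda>_. \<mu>)"
  unfolding select_def
proof (rule measurable_restrict)
  fix i assume "i \<in> {..<n}"
  then show "(\<lambda>x. fst x (i, snd x i)) \<in> super_space n \<mu> \<rightarrow>\<^sub>M \<mu>"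
    using measurable_supersample_coin_entry[where c = "\<lambda>b. b"] by simp
qed

lemma product_prob_space_const: "prob_space M \<Longrightarrow> product_prob_space (\<lambda>_. M)"
  by (simp add: product_prob_space_def product_prob_space_axioms_def product_sigma_finite_def
      prob_space_imp_sigma_finite)

lemma emeasure_fair_coin:
  assumes "i < n"
  shows "emeasure (PiM {..<n} (\<lambda>_. measure_pmf (bernoulli_pmf (1/2))))
           {u \<in> space (PiM {..<n} (\<lambda>_. measure_pmf (bernoulli_pmf (1/2)))). u i = b} = 1/2"
proof -
  interpret product_prob_space "\<lambda>_. measure_pmf (bernoulli_pmf (1/2))" "{..<n}"
    by (intro product_prob_space_const prob_space_measure_pmf)
  have "emeasure (PiM {..<n} (\<lambda>_. measure_pmf (bernoulli_pmf (1/2))))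
      {u \<in> space (PiM {..<n} (\<lambda>_. measure_pmf (bernoulli_pmf (1/2)))). u i \<in> {b}}
      = emeasure (measure_pmf (bernoulli_pmf (1/2))) {b}"
    using assms by (intro emeasure_PiM_Collect_single) auto
  then show ?thesis
    by (cases b) (simp_all add: emeasure_pmf_single ennreal_minus flip: divide_ennreal,
        simp_all add: divide_ennreal_def)
qed

lemma nn_integral_PiM_split_last:
  fixes n :: nat
  assumes \<mu>: "prob_space \<mu>" and G[measurable]: "G \<in> borel_measurable (PiM {..<n} (\<lambda>_. \<mu>) \<Otimes>\<^sub>M \<mu>)"
  shows "(\<lambda>\<omega>. G (restrict \<omega> {..<n}, \<omega> n)) \<in> borel_measurable (PiM {..n} (\<lambda>_. \<mu>))"
    and "(\<integral>\<^sup>+\<omega>. G (restrict \<omega> {..<n}, \<omega> n) \<partial>PiM {..n} (\<lambda>_. \<mu>))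
      = (\<integral>\<^sup>+s. \<integral>\<^sup>+z. G (s, z) \<partial>\<mu> \<partial>PiM {..<n} (\<lambda>_. \<mu>))"
proof -
  interpret product_prob_space "\<lambda>_. \<mu>" "{..<n}"
    using \<mu> by (rule product_prob_space_const)
  define H where "H \<omega> = G (restrict \<omega> {..<n}, \<omega> n)" for \<omega>
  have H[measurable]: "H \<in> borel_measurable (PiM {..n} (\<lambda>_. \<mu>))"
    unfolding H_def by (intro measurable_compose[OF _ G] measurable_Pair measurable_restrict_subset
        measurable_component_singleton) auto
  then show "(\<lambda>\<omega>. G (restrict \<omega> {..<n}, \<omega> n)) \<in> borel_measurable (PiM {..n} (\<lambda>_. \<mu>))"
    by (simp add: H_def)
  have "{..n} = insert n {..<n}"
    by auto
  then have "(\<integral>\<^sup>+\<omega>. H \<omega> \<partial>PiM {..n} (\<lambda>_. \<mu>)) = (\<integral>\<^sup>+s. \<integral>\<^sup>+z. H (s(n := z)) \<partial>\<mu> \<partial>PiM {..<n} (\<lambda>_. \<mu>))"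
    using product_nn_integral_insert[of "{..<n}" n H] H by simp
  also have "\<dots> = (\<integral>\<^sup>+s. \<integral>\<^sup>+z. G (s, z) \<partial>\<mu> \<partial>PiM {..<n} (\<lambda>_. \<mu>))"
    by (intro nn_integral_cong)
       (auto simp: H_def space_PiM PiE_def extensional_def restrict_def fun_eq_iff intro!: arg_cong[where f=G])
  finally show "(\<integral>\<^sup>+\<omega>. G (restrict \<omega> {..<n}, \<omega> n) \<partial>PiM {..n} (\<lambda>_. \<mu>))
      = (\<integral>\<^sup>+s. \<integral>\<^sup>+z. G (s, z) \<partial>\<mu> \<partial>PiM {..<n} (\<lambda>_. \<mu>))"
    by (simp only: H_def)
qed

text \<open>
  For fixed coins \<open>u\<close>, the training sample and the held-out entry \<open>(i, \<not> u i)\<close> read off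
  \<open>n + 1\<close> distinct coordinates of the supersample, hence are independent with law \<open>\<mu>\<close> each.
\<close>

lemma nn_integral_select_held_out_fixed_coins:
  assumes \<mu>: "prob_space \<mu>" and i: "i < n"
    and G[measurable]: "G \<in> borel_measurable (PiM {..<n} (\<lambda>_. \<mu>) \<Otimes>\<^sub>M \<mu>)"
  shows "(\<integral>\<^sup>+zt. G (select n zt u, zt (i, \<not> u i)) \<partial>PiM ({..<n} \<times> UNIV) (\<lambda>_. \<mu>))
       = (\<integral>\<^sup>+s. \<integral>\<^sup>+z. G (s, z) \<partial>\<mu> \<partial>PiM {..<n} (\<lambda>_. \<mu>))"
proof -
  define t where "t j = (if j < n then (j, u j) else (i, \<not> u i))" for j
  let ?H = "\<lambda>\<omega>. G (restrict \<omega> {..<n}, \<omega> n)"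
  have t: "inj_on t {..n}" "t \<in> {..n} \<rightarrow> {..<n} \<times> UNIV"
    using i unfolding inj_on_def t_def by (auto split: if_splits)
  have reindex: "(\<lambda>\<omega>. \<lambda>j\<in>{..n}. \<omega> (t j)) \<in> PiM ({..<n} \<times> UNIV) (\<lambda>_. \<mu>) \<rightarrow>\<^sub>M PiM {..n} (\<lambda>_. \<mu>)"
    using t by (intro measurable_restrict measurable_component_singleton) auto
  have "?H (\<lambda>j\<in>{..n}. zt (t j)) = G (select n zt u, zt (i, \<not> u i))" for zt
  proof -
    have "restrict (\<lambda>j\<in>{..n}. zt (t j)) {..<n} = select n zt u"
      by (auto simp: select_def t_def restrict_def fun_eq_iff)
    then show ?thesis
      by (simp add: t_def)
  qed
  then have "(\<integral>\<^sup>+zt. G (select n zt u, zt (i, \<not> u i)) \<partial>PiM ({..<n} \<times> UNIV) (\<lambda>_. \<mu>))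
      = (\<integral>\<^sup>+\<omega>. ?H \<omega> \<partial>distr (PiM ({..<n} \<times> UNIV) (\<lambda>_. \<mu>)) (PiM {..n} (\<lambda>_. \<mu>)) (\<lambda>\<omega>. \<lambda>j\<in>{..n}. \<omega> (t j)))"
    using nn_integral_PiM_split_last(1)[OF \<mu> G] by (simp add: nn_integral_distr[OF reindex])
  also have "\<dots> = (\<integral>\<^sup>+\<omega>. ?H \<omega> \<partial>PiM {..n} (\<lambda>_. \<mu>))"
    using distr_PiM_reindex[of "{..<n} \<times> UNIV" "\<lambda>_. \<mu>" t "{..n}"] \<mu> t by simp
  also have "\<dots> = (\<integral>\<^sup>+s. \<integral>\<^sup>+z. G (s, z) \<partial>\<mu> \<partial>PiM {..<n} (\<lambda>_. \<mu>))"
    by (rule nn_integral_PiM_split_last(2)[OF \<mu> G])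
  finally show ?thesis .
qed

lemma nn_integral_super_space_coin:
  assumes \<mu>: "prob_space \<mu>" and i: "i < n"
    and G[measurable]: "G \<in> borel_measurable (PiM {..<n} (\<lambda>_. \<mu>) \<Otimes>\<^sub>M \<mu>)"
  shows "(\<integral>\<^sup>+x. indicator {x. snd x i = b} x * G (select n (fst x) (snd x), fst x (i, \<not> snd x i))
            \<partial>super_space n \<mu>)
       = 1/2 * (\<integral>\<^sup>+s. \<integral>\<^sup>+z. G (s, z) \<partial>\<mu> \<partial>PiM {..<n} (\<lambda>_. \<mu>))"
proof -
  let ?Z = "PiM ({..<n} \<times> UNIV) (\<lambda>_. \<mu>)"
  let ?B = "PiM {..<n} (\<lambda>_. measure_pmf (bernoulli_pmf (1/2)))"
  let ?C = "\<integral>\<^sup>+s. \<integral>\<^sup>+z. G (s, z) \<partial>\<mu> \<partial>PiM {..<n} (\<lambda>_. \<mu>)"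
  interpret Z: prob_space ?Z
    using \<mu> by (intro prob_space_PiM) auto
  interpret B: prob_space ?B
    by (intro prob_space_PiM prob_space_measure_pmf)
  interpret pair_sigma_finite ?Z ?B ..
  have "(\<lambda>x. indicator {x. snd x i = b} x * G (select n (fst x) (snd x), fst x (i, \<not> snd x i)))
      \<in> borel_measurable (super_space n \<mu>)"
    using i by measurable
  then have "(\<integral>\<^sup>+x. indicator {x. snd x i = b} x * G (select n (fst x) (snd x), fst x (i, \<not> snd x i))
              \<partial>super_space n \<mu>)
      = (\<integral>\<^sup>+u. \<integral>\<^sup>+zt. indicator {x. snd x i = b} (zt, u) * G (select n zt u, zt (i, \<not> u i)) \<partial>?Z \<partial>?B)"
    unfolding super_space_def by (simp only: nn_integral_snd[symmetric] fst_conv snd_conv)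
  also have "\<dots> = (\<integral>\<^sup>+u. ?C * indicator {u \<in> space ?B. u i = b} u \<partial>?B)"
  proof (rule nn_integral_cong)
    fix u assume "u \<in> space ?B"
    then show "(\<integral>\<^sup>+zt. indicator {x. snd x i = b} (zt, u) * G (select n zt u, zt (i, \<not> u i)) \<partial>?Z)
        = ?C * indicator {u \<in> space ?B. u i = b} u"
      using nn_integral_select_held_out_fixed_coins[OF \<mu> i G, of u] by (cases "u i = b") simp_all
  qed
  also have "\<dots> = ?C * emeasure ?B {u \<in> space ?B. u i = b}"
    using i by (intro nn_integral_cmult_indicator) measurable
  also have "\<dots> = 1/2 * ?C"
    using emeasure_fair_coin[OF i] by (simp add: mult.commute)
  finally show ?thesis .
qed

lemma nn_integral_super_space_select:
  assumes \<mu>: "prob_space \<mu>" and n: "0 < n"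
    and H[measurable]: "H \<in> borel_measurable (PiM {..<n} (\<lambda>_. \<mu>))"
  shows "(\<integral>\<^sup>+x. H (select n (fst x) (snd x)) \<partial>super_space n \<mu>) = (\<integral>\<^sup>+s. H s \<partial>PiM {..<n} (\<lambda>_. \<mu>))"
proof -
  interpret prob_space \<mu> by (fact \<mu>)
  have coin: "(\<integral>\<^sup>+x. indicator {x. snd x 0 = b} x * H (select n (fst x) (snd x)) \<partial>super_space n \<mu>)
      = 1/2 * (\<integral>\<^sup>+s. H s \<partial>PiM {..<n} (\<lambda>_. \<mu>))" for b
    using nn_integral_super_space_coin[OF \<mu> n, of "\<lambda>p. H (fst p)" b] by (simp add: emeasure_space_1)
  have "(\<integral>\<^sup>+x. H (select n (fst x) (snd x)) \<partial>super_space n \<mu>)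
      = (\<integral>\<^sup>+x. indicator {x. snd x 0 = True} x * H (select n (fst x) (snd x))
            + indicator {x. snd x 0 = False} x * H (select n (fst x) (snd x)) \<partial>super_space n \<mu>)"
    by (intro nn_integral_cong) (simp split: split_indicator)
  also have "\<dots> = 1/2 * (\<integral>\<^sup>+s. H s \<partial>PiM {..<n} (\<lambda>_. \<mu>)) + 1/2 * (\<integral>\<^sup>+s. H s \<partial>PiM {..<n} (\<lambda>_. \<mu>))"
    using n by (subst nn_integral_add) (measurable, simp only: coin)
  finally show ?thesis
    by (simp flip: distrib_right add_divide_distrib_ennreal)
qed

section \<open>Risks of a learning algorithm\<close>

lemma enn2real_half: "enn2real (1/2) = 1/2"
proof -
  have "ennreal 1 / ennreal 2 = ennreal (1 / 2)"
    by (rule divide_ennreal) simp_all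
  then have "(1 / 2 :: ennreal) = ennreal (1 / 2)"
    by (simp only: ennreal_1 ennreal_numeral)
  then show ?thesis
    by (simp only: enn2real_ennreal)
qed

lemma pop_risk_nonneg: "(\<And>w z. 0 \<le> l w z) \<Longrightarrow> 0 \<le> pop_risk n \<mu> Wm A l"
  unfolding pop_risk_def by (intro Bochner_Integration.integral_nonneg)

context
  fixes n :: nat and \<mu> :: "'z measure" and Wm :: "'w measure" and A :: "(nat \<Rightarrow> 'z) \<Rightarrow> 'w measure"
  assumes \<mu>: "prob_space \<mu>" and A: "A \<in> PiM {..<n} (\<lambda>_. \<mu>) \<rightarrow>\<^sub>M prob_algebra Wm"
begin

lemma measurable_algorithm_select:
  "(\<lambda>x. A (select n (fst x) (snd x))) \<in> super_space n \<mu> \<rightarrow>\<^sub>M prob_algebra Wm"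
  by (rule measurable_compose[OF measurable_select A])

lemma prob_space_super_joint: "prob_space (super_joint n \<mu> Wm A)"
  unfolding super_joint_eq_bind
  by (rule prob_space_bind_kernel_pair[OF prob_space_super_space[OF \<mu>] measurable_algorithm_select])

lemma sets_super_joint[measurable_cong]: "sets (super_joint n \<mu> Wm A) = sets (super_space n \<mu> \<Otimes>\<^sub>M Wm)"
  unfolding super_joint_eq_bind
  by (rule sets_bind_kernel_pair[OF prob_space_super_space[OF \<mu>] measurable_algorithm_select])

lemma nn_integral_super_joint:
  "F \<in> borel_measurable (super_space n \<mu> \<Otimes>\<^sub>M Wm) \<Longrightarrow>
    (\<integral>\<^sup>+y. F y \<partial>super_joint n \<mu> Wm A) =
    (\<integral>\<^sup>+x. \<integral>\<^sup>+w. F (x, w) \<partial>A (select n (fst x) (snd x)) \<partial>super_space n \<mu>)"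
  unfolding super_joint_eq_bind
  by (rule nn_integral_bind_kernel_pair[OF prob_space_super_space[OF \<mu>] measurable_algorithm_select])

lemma prob_space_std_joint: "prob_space (std_joint n \<mu> Wm A)"
  unfolding std_joint_def using \<mu> by (intro prob_space_bind_kernel_pair[OF _ A] prob_space_PiM) auto

lemma sets_std_joint[measurable_cong]: "sets (std_joint n \<mu> Wm A) = sets (PiM {..<n} (\<lambda>_. \<mu>) \<Otimes>\<^sub>M Wm)"
  unfolding std_joint_def using \<mu> by (intro sets_bind_kernel_pair[OF _ A] prob_space_PiM) auto

lemma nn_integral_std_joint:
  "F \<in> borel_measurable (PiM {..<n} (\<lambda>_. \<mu>) \<Otimes>\<^sub>M Wm) \<Longrightarrow>
    (\<integral>\<^sup>+y. F y \<partial>std_joint n \<mu> Wm A) = (\<integral>\<^sup>+s. \<integral>\<^sup>+w. F (s, w) \<partial>A s \<partial>PiM {..<n} (\<lambda>_. \<mu>))"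
  unfolding std_joint_def using \<mu> by (intro nn_integral_bind_kernel_pair[OF _ A] prob_space_PiM) auto

lemma prob_super_joint_coin:
  assumes i: "i < n"
  shows "measure (super_joint n \<mu> Wm A) {y \<in> space (super_joint n \<mu> Wm A). sU i y = b} = 1/2"
proof -
  let ?J = "super_joint n \<mu> Wm A"
  interpret \<mu>: prob_space \<mu> by (fact \<mu>)
  interpret S: prob_space "PiM {..<n} (\<lambda>_. \<mu>)" using \<mu> by (intro prob_space_PiM) auto
  have [measurable]: "Measurable.pred (super_space n \<mu> \<Otimes>\<^sub>M Wm) (sU i)"
    unfolding sU_def using i by measurable
  have "{y \<in> space ?J. sU i y = b} \<in> sets ?J"
    by measurable
  then have "emeasure ?J {y \<in> space ?J. sU i y = b} = (\<integral>\<^sup>+y. indicator {y. sU i y = b} y \<partial>?J)"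
    by (auto intro!: nn_integral_cong split: split_indicator simp flip: nn_integral_indicator)
  also have "\<dots> = (\<integral>\<^sup>+x. \<integral>\<^sup>+w. indicator {y. sU i y = b} (x, w) \<partial>A (select n (fst x) (snd x)) \<partial>super_space n \<mu>)"
    by (intro nn_integral_super_joint) measurable
  also have "\<dots> = (\<integral>\<^sup>+x. indicator {x. snd x i = b} x * 1 \<partial>super_space n \<mu>)"
  proof (intro nn_integral_cong)
    fix x assume "x \<in> space (super_space n \<mu>)"
    then interpret prob_space "A (select n (fst x) (snd x))"
      using measurable_space[OF measurable_algorithm_select] by (simp add: space_prob_algebra)
    show "(\<integral>\<^sup>+w. indicator {y. sU i y = b} (x, w) \<partial>A (select n (fst x) (snd x)))
        = indicator {x. snd x i = b} x * 1"
      by (simp add: sU_def indicator_def emeasure_space_1)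
  qed
  also have "\<dots> = 1/2"
    using nn_integral_super_space_coin[OF \<mu> i, of "\<lambda>_. 1" b] by (simp add: \<mu>.emeasure_space_1 S.emeasure_space_1)
  finally show ?thesis
    by (simp only: measure_def enn2real_half)
qed

context
  fixes l :: "'w \<Rightarrow> 'z \<Rightarrow> real"
  assumes l_meas[measurable]: "(\<lambda>(w, z). l w z) \<in> borel_measurable (Wm \<Otimes>\<^sub>M \<mu>)"
    and l_nonneg: "\<And>w z. 0 \<le> l w z" and l_le_1: "\<And>w z. l w z \<le> 1"
begin

lemma nn_integral_algorithm_swap:
  assumes s: "s \<in> space (PiM {..<n} (\<lambda>_. \<mu>))"
  shows "(\<integral>\<^sup>+w. \<integral>\<^sup>+z. l w z \<partial>\<mu> \<partial>A s) = (\<integral>\<^sup>+z. \<integral>\<^sup>+w. l w z \<partial>A s \<partial>\<mu>)"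
proof -
  have As: "prob_space (A s)" "sets (A s) = sets Wm"
    using measurable_space[OF A s] by (auto simp: space_prob_algebra)
  interpret pair_sigma_finite "A s" \<mu>
    using As \<mu> by (intro pair_sigma_finite.intro prob_space_imp_sigma_finite)
  have sets_eq: "sets (A s \<Otimes>\<^sub>M \<mu>) = sets (Wm \<Otimes>\<^sub>M \<mu>)"
    using As by (intro sets_pair_measure_cong) simp_all
  have "(\<lambda>(w, z). ennreal (l w z)) \<in> borel_measurable (A s \<Otimes>\<^sub>M \<mu>)"
    unfolding measurable_cong_sets[OF sets_eq refl] by measurable
  then show ?thesis
    using Fubini'[of "\<lambda>w z. ennreal (l w z)"] by simp
qed

lemma ennreal_pop_risk:
  "ennreal (pop_risk n \<mu> Wm A l) = (\<integral>\<^sup>+s. \<integral>\<^sup>+z. \<integral>\<^sup>+w. l w z \<partial>A s \<partial>\<mu> \<partial>PiM {..<n} (\<lambda>_. \<mu>))"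
proof -
  interpret \<mu>: prob_space \<mu> by (fact \<mu>)
  interpret std: prob_space "std_joint n \<mu> Wm A" by (rule prob_space_std_joint)
  define h where "h w = (\<integral>z. l w z \<partial>\<mu>)" for w
  have h_meas[measurable]: "h \<in> borel_measurable Wm"
    unfolding h_def using l_meas by (intro \<mu>.borel_measurable_lebesgue_integral) simp
  have h_bounds: "0 \<le> h w \<and> h w \<le> 1" for w
    unfolding h_def using l_nonneg l_le_1
    by (cases "integrable \<mu> (l w)") (simp_all add: \<mu>.integral_le_const not_integrable_integral_eq)
  have h_nn: "ennreal (h w) = (\<integral>\<^sup>+z. l w z \<partial>\<mu>)" if "w \<in> space Wm" for w
  proof -
    have "(\<lambda>z. l w z) \<in> borel_measurable \<mu>"
      using measurable_Pair2[OF l_meas that] by simp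
    then have "integrable \<mu> (\<lambda>z. l w z)"
      by (intro \<mu>.integrable_const_bound[where B=1]) (auto simp: l_nonneg l_le_1)
    then show ?thesis
      unfolding h_def by (subst nn_integral_eq_integral) (auto simp: l_nonneg)
  qed
  have "integrable (std_joint n \<mu> Wm A) (\<lambda>p. h (snd p))"
    using h_bounds by (intro std.integrable_const_bound[where B=1]) (simp_all, measurable)
  then have "ennreal (pop_risk n \<mu> Wm A l) = (\<integral>\<^sup>+p. h (snd p) \<partial>std_joint n \<mu> Wm A)"
    unfolding pop_risk_def h_def[symmetric] using h_bounds by (simp add: nn_integral_eq_integral)
  also have "\<dots> = (\<integral>\<^sup>+s. \<integral>\<^sup>+w. h w \<partial>A s \<partial>PiM {..<n} (\<lambda>_. \<mu>))"
  proof -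
    have "(\<lambda>p. ennreal (h (snd p))) \<in> borel_measurable (PiM {..<n} (\<lambda>_. \<mu>) \<Otimes>\<^sub>M Wm)"
      by measurable
    from nn_integral_std_joint[OF this] show ?thesis
      by simp
  qed
  also have "\<dots> = (\<integral>\<^sup>+s. \<integral>\<^sup>+z. \<integral>\<^sup>+w. l w z \<partial>A s \<partial>\<mu> \<partial>PiM {..<n} (\<lambda>_. \<mu>))"
  proof (intro nn_integral_cong)
    fix s assume s: "s \<in> space (PiM {..<n} (\<lambda>_. \<mu>))"
    then have "sets (A s) = sets Wm"
      using measurable_space[OF A s] by (simp add: space_prob_algebra)
    then have "(\<integral>\<^sup>+w. h w \<partial>A s) = (\<integral>\<^sup>+w. \<integral>\<^sup>+z. l w z \<partial>\<mu> \<partial>A s)"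
      using h_nn sets_eq_imp_space_eq by (intro nn_integral_cong) blast
    then show "(\<integral>\<^sup>+w. h w \<partial>A s) = (\<integral>\<^sup>+z. \<integral>\<^sup>+w. l w z \<partial>A s \<partial>\<mu>)"
      by (simp only: nn_integral_algorithm_swap[OF s])
  qed
  finally show ?thesis .
qed

lemma nn_integral_held_out_loss:
  assumes i: "i < n"
  shows "(\<integral>\<^sup>+y. indicator {y. sU i y = b} y * ennreal (l (sW y) (sZ i (\<not> b) y)) \<partial>super_joint n \<mu> Wm A)
       = 1/2 * ennreal (pop_risk n \<mu> Wm A l)"
proof -
  define G where "G p = (\<integral>\<^sup>+w. l w (snd p) \<partial>A (fst p))" for p
  have G_meas: "G \<in> borel_measurable (PiM {..<n} (\<lambda>_. \<mu>) \<Otimes>\<^sub>M \<mu>)"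
    unfolding G_def
  proof (rule nn_integral_measurable_subprob_algebra2)
    show "(\<lambda>(p, w). ennreal (l w (snd p))) \<in> borel_measurable ((PiM {..<n} (\<lambda>_. \<mu>) \<Otimes>\<^sub>M \<mu>) \<Otimes>\<^sub>M Wm)"
      by measurable
    show "(\<lambda>p. A (fst p)) \<in> PiM {..<n} (\<lambda>_. \<mu>) \<Otimes>\<^sub>M \<mu> \<rightarrow>\<^sub>M subprob_algebra Wm"
      by (rule measurable_compose[OF measurable_fst measurable_prob_algebraD[OF A]])
  qed
  have [measurable]: "Measurable.pred (super_space n \<mu> \<Otimes>\<^sub>M Wm) (\<lambda>y. sU i y = b)"
    unfolding sU_def using i by measurable
  have "(\<lambda>y. indicator {y. sU i y = b} y * ennreal (l (sW y) (sZ i (\<not> b) y)))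
      \<in> borel_measurable (super_space n \<mu> \<Otimes>\<^sub>M Wm)"
    unfolding sW_def sZ_def using i by measurable
  then have "(\<integral>\<^sup>+y. indicator {y. sU i y = b} y * ennreal (l (sW y) (sZ i (\<not> b) y)) \<partial>super_joint n \<mu> Wm A)
      = (\<integral>\<^sup>+x. \<integral>\<^sup>+w. indicator {y. sU i y = b} (x, w) * ennreal (l w (fst x (i, \<not> b)))
            \<partial>A (select n (fst x) (snd x)) \<partial>super_space n \<mu>)"
    by (simp add: nn_integral_super_joint sW_def sZ_def)
  also have "\<dots> = (\<integral>\<^sup>+x. indicator {x. snd x i = b} x * G (select n (fst x) (snd x), fst x (i, \<not> snd x i))
            \<partial>super_space n \<mu>)"
    by (intro nn_integral_cong) (auto simp: sU_def G_def indicator_def)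
  also have "\<dots> = 1/2 * (\<integral>\<^sup>+s. \<integral>\<^sup>+z. G (s, z) \<partial>\<mu> \<partial>PiM {..<n} (\<lambda>_. \<mu>))"
    by (rule nn_integral_super_space_coin[OF \<mu> i G_meas])
  also have "\<dots> = 1/2 * ennreal (pop_risk n \<mu> Wm A l)"
    by (simp add: ennreal_pop_risk G_def)
  finally show ?thesis .
qed

lemma emp_risk_eq_training_loss:
  assumes n: "0 < n"
  shows "emp_risk n \<mu> Wm A l
       = (\<integral>y. (\<Sum>i<n. l (sW y) (sZ i (sU i y) y)) / real n \<partial>super_joint n \<mu> Wm A)"
proof -
  define e where "e p = (\<Sum>i<n. l (snd p) (fst p i)) / real n" for p :: "(nat \<Rightarrow> 'z) \<times> 'w"
  have e_meas[measurable]: "e \<in> borel_measurable (PiM {..<n} (\<lambda>_. \<mu>) \<Otimes>\<^sub>M Wm)"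
    unfolding e_def by measurable
  have e_nonneg: "0 \<le> e p" for p
    unfolding e_def by (intro divide_nonneg_nonneg sum_nonneg l_nonneg) simp
  have avg_meas: "(\<lambda>s. \<integral>\<^sup>+w. e (s, w) \<partial>A s) \<in> borel_measurable (PiM {..<n} (\<lambda>_. \<mu>))"
    by (rule nn_integral_measurable_subprob_algebra2[OF _ measurable_prob_algebraD[OF A]]) measurable
  have "(\<integral>\<^sup>+p. e p \<partial>std_joint n \<mu> Wm A) = (\<integral>\<^sup>+s. \<integral>\<^sup>+w. e (s, w) \<partial>A s \<partial>PiM {..<n} (\<lambda>_. \<mu>))"
    by (rule nn_integral_std_joint) measurable
  also have "\<dots> = (\<integral>\<^sup>+x. \<integral>\<^sup>+w. e (select n (fst x) (snd x), w) \<partial>A (select n (fst x) (snd x)) \<partial>super_space n \<mu>)"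
    by (rule nn_integral_super_space_select[OF \<mu> n avg_meas, symmetric])
  also have "\<dots> = (\<integral>\<^sup>+y. e (select n (fst (fst y)) (snd (fst y)), snd y) \<partial>super_joint n \<mu> Wm A)"
  proof -
    have "(\<lambda>y. ennreal (e (select n (fst (fst y)) (snd (fst y)), snd y))) \<in> borel_measurable (super_space n \<mu> \<Otimes>\<^sub>M Wm)"
      by measurable
    from nn_integral_super_joint[OF this] show ?thesis
      by simp
  qed
  finally have "(\<integral>p. e p \<partial>std_joint n \<mu> Wm A) = (\<integral>y. e (select n (fst (fst y)) (snd (fst y)), snd y) \<partial>super_joint n \<mu> Wm A)"
    using e_nonneg by (simp add: integral_eq_nn_integral)
  also have "\<dots> = (\<integral>y. (\<Sum>i<n. l (sW y) (sZ i (sU i y) y)) / real n \<partial>super_joint n \<mu> Wm A)"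
    by (intro Bochner_Integration.integral_cong) (simp_all add: e_def select_def sW_def sZ_def sU_def)
  finally show ?thesis
    unfolding emp_risk_def e_def .
qed

end

end

section \<open>Interpolating algorithms under the zero-one loss\<close>

lemma zero_one_loss_cases: "zero_one_loss f w z = 0 \<or> zero_one_loss f w z = 1"
  unfolding zero_one_loss_def by simp

lemma deltaL_zero_one_loss_range: "deltaL (zero_one_loss f) i x \<in> {-1, 0, 1}"
  using zero_one_loss_cases[of f "sW x" "sZ i True x"] zero_one_loss_cases[of f "sW x" "sZ i False x"]
  by (auto simp: deltaL_def sL_def)

context
  fixes n :: nat and \<mu> :: "('x \<times> 'y) measure" and Wm :: "'w measure"
    and A :: "(nat \<Rightarrow> 'x \<times> 'y) \<Rightarrow> 'w measure" and f :: "'w \<Rightarrow> 'x \<Rightarrow> 'y"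
  assumes \<mu>: "prob_space \<mu>" and A: "A \<in> PiM {..<n} (\<lambda>_. \<mu>) \<rightarrow>\<^sub>M prob_algebra Wm"
    and loss_meas[measurable]: "(\<lambda>(w, z). zero_one_loss f w z) \<in> borel_measurable (Wm \<Otimes>\<^sub>M \<mu>)"
begin

declare sets_super_joint[OF \<mu> A, measurable_cong]

lemma measurable_loss_entry[measurable]:
  "i < n \<Longrightarrow> (\<lambda>x. zero_one_loss f (sW x) (sZ i j x)) \<in> borel_measurable (super_joint n \<mu> Wm A)"
  unfolding sW_def sZ_def by measurable

lemma measurable_sU[measurable]: "i < n \<Longrightarrow> sU i \<in> super_joint n \<mu> Wm A \<rightarrow>\<^sub>M count_space UNIV"
  unfolding sU_def by measurable

lemma measurable_deltaL:
  assumes i: "i < n"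
  shows "deltaL (zero_one_loss f) i \<in> super_joint n \<mu> Wm A \<rightarrow>\<^sub>M count_space UNIV"
proof (rule measurable_simple_function, rule simple_function_borel_measurable)
  show "deltaL (zero_one_loss f) i \<in> borel_measurable (super_joint n \<mu> Wm A)"
    unfolding deltaL_def sL_def using i by measurable
  have "deltaL (zero_one_loss f) i ` space (super_joint n \<mu> Wm A) \<subseteq> {-1, 0, 1}"
    by (intro image_subsetI deltaL_zero_one_loss_range)
  then show "finite (deltaL (zero_one_loss f) i ` space (super_joint n \<mu> Wm A))"
    by (rule finite_subset) simp
qed

context
  fixes i :: nat
  assumes i: "i < n"
    and interpolating: "AE x in super_joint n \<mu> Wm A. zero_one_loss f (sW x) (sZ i (sU i x) x) = 0"
begin

lemma prob_deltaL_coin: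
  defines "J \<equiv> super_joint n \<mu> Wm A" and "L \<equiv> pop_risk n \<mu> Wm A (zero_one_loss f)"
  shows "measure J {x \<in> space J. deltaL (zero_one_loss f) i x = d \<and> sU i x = b}
    = (if d = 0 then (1 - L) / 2 else if d = (if b then -1 else 1) then L / 2 else 0)"
proof -
  interpret J: prob_space J
    unfolding J_def by (rule prob_space_super_joint[OF \<mu> A])
  define s :: real where "s = (if b then -1 else 1)"
  define H where "H x = zero_one_loss f (sW x) (sZ i (\<not> b) x)" for x
  define Err where "Err = {x \<in> space J. sU i x = b \<and> H x = 1}"
  have [measurable]: "H \<in> borel_measurable J" and Err_sets[measurable]: "Err \<in> sets J"
    and coin_sets[measurable]: "{x \<in> space J. sU i x = b} \<in> sets J"
    unfolding H_def Err_def J_def using i by measurable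
  have "indicator Err x = indicator {x. sU i x = b} x * ennreal (H x)" if "x \<in> space J" for x
    using that zero_one_loss_cases[of f "sW x" "sZ i (\<not> b) x"]
    by (auto simp: Err_def H_def split: split_indicator)
  then have "emeasure J Err = (\<integral>\<^sup>+x. indicator {x. sU i x = b} x * ennreal (H x) \<partial>J)"
    by (simp cong: nn_integral_cong flip: nn_integral_indicator)
  also have "\<dots> = 1/2 * ennreal L"
    unfolding J_def L_def H_def
    by (rule nn_integral_held_out_loss[OF \<mu> A loss_meas _ _ i]) (simp_all add: zero_one_loss_def)
  finally have err: "measure J Err = L / 2"
    using pop_risk_nonneg[of "zero_one_loss f"] unfolding measure_def L_def
    by (simp only: enn2real_mult enn2real_half enn2real_ennreal zero_one_loss_def; simp)
  have held_out: "AE x in J. sU i x = b \<longrightarrow> deltaL (zero_one_loss f) i x = s * H x"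
    using interpolating unfolding J_def[symmetric]
    by eventually_elim (auto simp: s_def H_def deltaL_def sL_def)
  have [measurable]: "{x \<in> space J. deltaL (zero_one_loss f) i x = d \<and> sU i x = b} \<in> sets J"
    using measurable_deltaL[OF i] i unfolding J_def sU_def by measurable
  have "AE x in J. (x \<in> {x \<in> space J. deltaL (zero_one_loss f) i x = d \<and> sU i x = b})
      \<longleftrightarrow> x \<in> (if d = 0 then {x \<in> space J. sU i x = b} - Err else if d = s then Err else {})"
    using held_out
  proof eventually_elim
    case (elim x)
    then show ?case
      using zero_one_loss_cases[of f "sW x" "sZ i (\<not> b) x"]
      by (cases "x \<in> space J") (auto simp: Err_def s_def H_def)
  qed
  then have "measure J {x \<in> space J. deltaL (zero_one_loss f) i x = d \<and> sU i x = b}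
      = measure J (if d = 0 then {x \<in> space J. sU i x = b} - Err else if d = s then Err else {})"
    by (rule measure_eq_AE) auto
  also have "\<dots> = (if d = 0 then (1 - L) / 2 else if d = s then L / 2 else 0)"
  proof -
    have "Err \<subseteq> {x \<in> space J. sU i x = b}"
      by (auto simp: Err_def)
    then have "measure J ({x \<in> space J. sU i x = b} - Err) = measure J {x \<in> space J. sU i x = b} - measure J Err"
      by (intro J.finite_measure_Diff Err_sets coin_sets)
    then show ?thesis
      using err prob_super_joint_coin[OF \<mu> A i] unfolding J_def[symmetric] by simp
  qed
  finally show ?thesis
    by (simp add: s_def)
qed

lemma prob_deltaL_zero_given_coin:
  "measure (super_joint n \<mu> Wm A) {x \<in> space (super_joint n \<mu> Wm A). deltaL (zero_one_loss f) i x = 0 \<and> sU i x = b}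
     / measure (super_joint n \<mu> Wm A) {x \<in> space (super_joint n \<mu> Wm A). sU i x = b}
   = 1 - pop_risk n \<mu> Wm A (zero_one_loss f)"
  using prob_super_joint_coin[OF \<mu> A i, of b] by (simp only: prob_deltaL_coin) simp

lemma MI_nats_deltaL_coin:
  "MI_nats (super_joint n \<mu> Wm A) (deltaL (zero_one_loss f) i) (sU i)
    = pop_risk n \<mu> Wm A (zero_one_loss f) * ln 2"
  unfolding MI_nats_def
proof (rule prob_space.mutual_information_binary_erasure[OF prob_space_super_joint[OF \<mu> A]
      measurable_deltaL[OF i] measurable_sU[OF i]])
  show "deltaL (zero_one_loss f) i x \<in> {-1, 0, 1}" for x
    by (rule deltaL_zero_one_loss_range)
qed (rule prob_deltaL_coin)

end

lemma emp_risk_interpolating: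
  assumes n: "0 < n"
    and interpolating: "\<forall>i<n. AE x in super_joint n \<mu> Wm A. zero_one_loss f (sW x) (sZ i (sU i x) x) = 0"
  shows "emp_risk n \<mu> Wm A (zero_one_loss f) = 0"
proof -
  have "AE x in super_joint n \<mu> Wm A. \<forall>i\<in>{..<n}. zero_one_loss f (sW x) (sZ i (sU i x) x) = 0"
    using interpolating by (intro eventually_ball_finite) auto
  moreover have "\<And>w z. 0 \<le> zero_one_loss f w z" "\<And>w z. zero_one_loss f w z \<le> 1"
    by (simp_all add: zero_one_loss_def)
  ultimately show ?thesis
    using n by (simp only: emp_risk_eq_training_loss[OF \<mu> A loss_meas])
      (auto intro!: integral_eq_zero_AE elim!: eventually_mono)
qed

end

theorem theorem3:
  fixes n :: nat
    and \<mu> :: "('x \<times> 'y) measure"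
    and Wm :: "'w measure"
    and A :: "(nat \<Rightarrow> 'x \<times> 'y) \<Rightarrow> 'w measure"
    and f :: "'w \<Rightarrow> 'x \<Rightarrow> 'y"
  assumes n_pos: "0 < n"
    and mu: "prob_space \<mu>"
    and A_kernel: "A \<in> PiM {..<n} (\<lambda>_. \<mu>) \<rightarrow>\<^sub>M prob_algebra Wm"
    and loss_meas: "(\<lambda>(w, z). zero_one_loss f w z) \<in> borel_measurable (Wm \<Otimes>\<^sub>M \<mu>)"
    and interpolating: "\<forall>i<n. AE x in super_joint n \<mu> Wm A.
                          zero_one_loss f (sW x) (sZ i (sU i x) x) = 0"
  shows "\<forall>i<n.
           (let J = super_joint n \<mu> Wm A;
                \<alpha> = measure J {x \<in> space J. deltaL (zero_one_loss f) i x = 0 \<and> sU i x = False}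
                    / measure J {x \<in> space J. sU i x = False}
            in \<alpha> = measure J {x \<in> space J. deltaL (zero_one_loss f) i x = 0 \<and> sU i x = True}
                    / measure J {x \<in> space J. sU i x = True}
             \<and> MI_nats J (deltaL (zero_one_loss f) i) (sU i) = (1 - \<alpha>) * ln 2)
         \<and> \<bar>gen_err n \<mu> Wm A (zero_one_loss f)\<bar> = pop_risk n \<mu> Wm A (zero_one_loss f)
         \<and> pop_risk n \<mu> Wm A (zero_one_loss f)
           = (\<Sum>i<n. MI_nats (super_joint n \<mu> Wm A) (deltaL (zero_one_loss f) i) (sU i)
                      / (real n * ln 2))"
proof -
  note facts = mu A_kernel loss_meas
  have alpha: "measure (super_joint n \<mu> Wm A)
        {x \<in> space (super_joint n \<mu> Wm A). deltaL (zero_one_loss f) i x = 0 \<and> sU i x = b}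
      / measure (super_joint n \<mu> Wm A) {x \<in> space (super_joint n \<mu> Wm A). sU i x = b}
      = 1 - pop_risk n \<mu> Wm A (zero_one_loss f)" if "i < n" for i b
    using that interpolating by (intro prob_deltaL_zero_given_coin[OF facts]) auto
  have MI: "MI_nats (super_joint n \<mu> Wm A) (deltaL (zero_one_loss f) i) (sU i)
      = pop_risk n \<mu> Wm A (zero_one_loss f) * ln 2" if "i < n" for i
    using that interpolating by (intro MI_nats_deltaL_coin[OF facts]) auto
  have "gen_err n \<mu> Wm A (zero_one_loss f) = pop_risk n \<mu> Wm A (zero_one_loss f)"
    using emp_risk_interpolating[OF facts n_pos interpolating] by (simp add: gen_err_def)
  moreover have "0 \<le> pop_risk n \<mu> Wm A (zero_one_loss f)"
    by (rule pop_risk_nonneg) (simp add: zero_one_loss_def)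
  ultimately show ?thesis
    using alpha[where b = False] alpha[where b = True] MI n_pos by (simp add: Let_def)
qed

end
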